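(* Let $v,a,b,c\in\mathbb{C}$ with $\Re(v)<2$, $\Re(c)>0$, and $\Re(vc+a+b)>0$, $\Re(vc+a-b)>0$, $\Re(vc-a+b)>0$, $\Re(vc-a-b)>0$. Fix a square root $\sqrt{a^2-b^2}$ and put $\sigma_1=\frac v2-\frac{\sqrt{a^2-b^2}}{2c}$, $\sigma_2=\frac v2+\frac{\sqrt{a^2-b^2}}{2c}$, $\sigma_3=\frac v2-\frac{a}{2c}-\frac{b}{2c}$, $\sigma_4=\frac v2-\frac{a}{2c}+\frac{b}{2c}$, $\sigma_5=\frac v2+\frac{a}{2c}+\frac{b}{2c}$, $\sigma_6=\frac v2+\frac{a}{2c}-\frac{b}{2c}$, $P=(vc-a-b)(vc+a+b)(vc-a+b)(vc+a-b)$; assume $\sigma_1,\sigma_2\notin\mathbb{Z}_0^-$ and $1+\sigma_j\notin\mathbb{Z}_0^-$ ($j=3,4,5,6$). Then $$ \int_0^\infty\frac{\sinh(ax)\cosh(bx)}{\sinh^{v}(cx)}\,dx=\frac{2^{v}(v^2ac^2-a^3+ab^2)}{P}\;{}_7F_6\!\left(\begin{matrix}v,\ 1+\sigma_1,\ 1+\sigma_2,\ \sigma_3,\ \sigma_4,\ \sigma_5,\ \sigma_6\\ \sigma_1,\ \sigma_2,\ 1+\sigma_3,\ 1+\sigma_4,\ 1+\sigma_5,\ 1+\sigma_6\end{matrix};\,1\right). $$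
   Context: $\mathbb{Z}_0^-=\{0,-1,-2,\dots\}$. The Pochhammer symbol is $(\lambda)_0=1$, $(\lambda)_n=\lambda(\lambda+1)\cdots(\lambda+n-1)$ for $n\ge1$. The generalized hypergeometric series is ${}_pF_q\!\left(\begin{matrix}\alpha_1,\dots,\alpha_p\\ \beta_1,\dots,\beta_q\end{matrix};z\right)=\sum_{n=0}^\infty\frac{(\alpha_1)_n\cdots(\alpha_p)_n}{(\beta_1)_n\cdots(\beta_q)_n}\frac{z^n}{n!}$ (with no $\beta_j\in\mathbb{Z}_0^-$); when $p=q+1$ and $z=1$ it converges if $\Re(\sum\beta_j-\sum\alpha_i)>0$. For $\Re(c)>0$ and $x>0$, the complex power $\sinh^{v}(cx)$ means $2^{-v}e^{vcx}(1-e^{-2cx})^{v}$, with the principal branch of $(1-e^{-2cx})^{v}$ (this agrees with the ordinary real power when $c>0$ and $v$ is real). *)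

theory Defs
  imports "HOL-Analysis.Analysis"
begin

definition hypergeo :: "complex list \<Rightarrow> complex list \<Rightarrow> complex \<Rightarrow> complex" where
  "hypergeo as bs z =
     (\<Sum>n. (\<Prod>a\<leftarrow>as. pochhammer a n) / (\<Prod>b\<leftarrow>bs. pochhammer b n) * z ^ n / fact n)"

definition sinh_pow :: "complex \<Rightarrow> complex \<Rightarrow> real \<Rightarrow> complex" where
  "sinh_pow v c x =
     (2 powr (-v)) * exp (v * c * of_real x) * (1 - exp (-2 * c * of_real x)) powr v"

end

(* For x > 0 the binomial series gives 1/sinh^v(cx) = 2^v sum_k (v)_k/k! e^(-(v+2k)cx).
   Multiplied by sinh(ax) cosh(bx), a combination of four exponentials, the k-th term integrates
   to 2^v (v)_k/k! a(W^2 - s^2)/prod(W +- a +- b) with W = (v+2k)c, and (1+sigma)_k/(sigma)_k =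
   (sigma+k)/sigma identifies this with 2^v (v^2 a c^2 - a^3 + a b^2)/P times the k-th term of the 7F6.
   Termwise integration is justified by dominated convergence: |sinh(ax)| <= |a| x e^(|Re a| x)
   makes the k-th absolute integral O(|(v)_k/k!|/k^2) = O(k^(Re v - 3)), summable as Re v < 2. *)

theory Submission
  imports Defs
begin

lemma einterval_0_infinity: "einterval 0 \<infinity> = {0::real<..}"
  by (auto simp: einterval_iff zero_ereal_def)

lemma set_integrable_exp_neg_mult:
  fixes W :: real assumes "W > 0"
  shows "set_integrable lborel {0<..} (\<lambda>x. exp (- W * x))"
proof -
  let ?F = "\<lambda>x::real. - exp (- W * x) / W"
  have "\<And>x. (?F has_real_derivative exp (- W * x)) (at x)"
    using assms by (auto intro!: derivative_eq_intros)
  moreover have "((?F \<circ> real_of_ereal) \<longlongrightarrow> - 1 / W) (at_right 0)"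
    unfolding zero_ereal_def ereal_tendsto_simps using assms by (auto intro!: tendsto_eq_intros)
  moreover have "((?F \<circ> real_of_ereal) \<longlongrightarrow> 0) (at_left \<infinity>)"
    unfolding ereal_tendsto_simps using assms by real_asymp
  ultimately have "set_integrable lborel (einterval 0 \<infinity>) (\<lambda>x. exp (- W * x))"
    by (intro interval_integral_FTC_nonneg) auto
  then show ?thesis by (simp add: einterval_0_infinity)
qed

lemma set_integral_x_exp_neg_mult:
  fixes W :: real assumes "W > 0"
  shows "set_integrable lborel {0<..} (\<lambda>x. x * exp (- W * x))"
    and "(LINT x:{0<..}|lborel. x * exp (- W * x)) = 1 / W\<^sup>2"
proof -
  let ?F = "\<lambda>x::real. - (x / W + 1 / W\<^sup>2) * exp (- W * x)"
  have "\<And>x. (?F has_real_derivative x * exp (- W * x)) (at x)"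
    using assms by (auto intro!: derivative_eq_intros simp: field_simps power2_eq_square)
  moreover have "((?F \<circ> real_of_ereal) \<longlongrightarrow> - (1 / W\<^sup>2)) (at_right 0)"
    unfolding zero_ereal_def ereal_tendsto_simps using assms by (auto intro!: tendsto_eq_intros)
  moreover have "((?F \<circ> real_of_ereal) \<longlongrightarrow> 0) (at_left \<infinity>)"
    unfolding ereal_tendsto_simps using assms by real_asymp
  ultimately have "set_integrable lborel (einterval 0 \<infinity>) (\<lambda>x. x * exp (- W * x))"
    and "(LBINT x=0..\<infinity>. x * exp (- W * x)) = 0 - (- (1 / W\<^sup>2))"
    by (intro interval_integral_FTC_nonneg; auto)+
  then show "set_integrable lborel {0<..} (\<lambda>x. x * exp (- W * x))"
    and "(LINT x:{0<..}|lborel. x * exp (- W * x)) = 1 / W\<^sup>2"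
    by (simp_all add: einterval_0_infinity interval_lebesgue_integral_0_infty)
qed

lemma set_integral_complex_exp_neg_mult:
  fixes w :: complex assumes w: "Re w > 0"
  shows "set_integrable lborel {0<..} (\<lambda>x::real. exp (- (w * of_real x)))"
    and "(LINT x:{0<..}|lborel. exp (- (w * of_real x))) = 1 / w"
proof -
  show integrable: "set_integrable lborel {0<..} (\<lambda>x::real. exp (- (w * of_real x)))"
  proof (rule set_integrable_bound[OF set_integrable_exp_neg_mult[OF w]])
    have "(\<lambda>x::real. exp (- (w * of_real x))) \<in> borel_measurable borel"
      by (intro borel_measurable_continuous_onI continuous_intros)
    then show "set_borel_measurable lborel {0<..} (\<lambda>x::real. exp (- (w * of_real x)))"
      unfolding set_borel_measurable_def by measurable
  qed simp
  let ?F = "\<lambda>x::real. - exp (- (w * of_real x)) / w"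
  have "(?F has_vector_derivative exp (- (w * of_real x))) (at x)" for x
  proof -
    have "((\<lambda>z. - exp (- (w * z)) / w) has_field_derivative exp (- (w * of_real x))) (at (of_real x))"
      using w by (auto intro!: derivative_eq_intros)
    from field_vector_diff_chain_at[OF has_vector_derivative_of_real[OF DERIV_ident] this]
    show ?thesis by (simp add: o_def)
  qed
  moreover have "((?F \<circ> real_of_ereal) \<longlongrightarrow> - 1 / w) (at_right 0)"
    unfolding zero_ereal_def ereal_tendsto_simps using w by (auto intro!: tendsto_eq_intros)
  moreover have "((?F \<circ> real_of_ereal) \<longlongrightarrow> 0) (at_left \<infinity>)"
  proof -
    have "((\<lambda>x::real. exp (- Re w * x)) \<longlongrightarrow> 0) at_top" using w by real_asymp
    then have lim: "((\<lambda>x::real. exp (- (w * of_real x))) \<longlongrightarrow> 0) at_top"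
      by (subst tendsto_norm_zero_iff[symmetric]) simp
    show ?thesis
      unfolding ereal_tendsto_simps using tendsto_divide_zero[OF tendsto_minus[OF lim, simplified], of w]
      by simp
  qed
  ultimately have "(LBINT x=0..\<infinity>. exp (- (w * of_real x))) = 0 - (- 1 / w)"
    using integrable
    by (intro interval_integral_FTC_integrable) (auto simp: einterval_0_infinity)
  then show "(LINT x:{0<..}|lborel. exp (- (w * of_real x))) = 1 / w"
    by (simp add: interval_lebesgue_integral_0_infty)
qed

lemma norm_sinh_le:
  fixes z :: complex
  shows "norm (sinh z) \<le> norm z * exp \<bar>Re z\<bar>"
proof -
  have "norm (exp z - exp (- z)) \<le> exp \<bar>Re z\<bar> * norm (z - (- z))"
  proof (rule field_differentiable_bound[of "closed_segment (- z) z" exp exp])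
    show "norm (exp u) \<le> exp \<bar>Re z\<bar>" if "u \<in> closed_segment (- z) z" for u
    proof -
      from that obtain t where t: "0 \<le> t" "t \<le> 1" "u = (1 - t) *\<^sub>R (- z) + t *\<^sub>R z"
        by (auto simp: closed_segment_def)
      have "Re u = (2 * t - 1) * Re z" unfolding t(3) by (simp add: algebra_simps)
      also have "\<dots> \<le> \<bar>2 * t - 1\<bar> * \<bar>Re z\<bar>" by (metis abs_ge_self abs_mult)
      also have "\<dots> \<le> \<bar>Re z\<bar>" using t(1,2) by (intro mult_left_le_one_le) auto
      finally show ?thesis by simp
    qed
  qed (auto intro!: DERIV_exp[THEN has_field_derivative_at_within])
  then have "norm (sinh z) \<le> exp \<bar>Re z\<bar> * norm z"
    by (simp add: sinh_def norm_divide norm_mult)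
  then show ?thesis by (simp only: mult.commute)
qed

lemma norm_cosh_le:
  fixes z :: complex
  shows "norm (cosh z) \<le> exp \<bar>Re z\<bar>"
proof -
  have "norm (cosh z) \<le> (norm (exp z) + norm (exp (- z))) / 2"
    unfolding cosh_def using norm_triangle_ineq[of "exp z" "exp (- z)"]
    by (simp add: divide_right_mono del: norm_exp_eq_Re)
  also have "\<dots> \<le> exp \<bar>Re z\<bar>"
    using exp_mono[OF abs_ge_self[of "Re z"]] exp_mono[OF abs_ge_minus_self[of "Re z"]]
    by (simp del: exp_le_cancel_iff)
  finally show ?thesis .
qed

lemma gbinomial_uminus_mult_power_uminus:
  fixes v E :: complex
  shows "((- v) gchoose n) * (- E) ^ n = pochhammer v n / fact n * E ^ n"
proof -
  have "((- v) gchoose n) * (- E) ^ n = ((-1) ^ n * (-1) ^ n) * pochhammer v n / fact n * E ^ n"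
    by (simp add: gbinomial_pochhammer power_minus[of E])
  also have "(-1::complex) ^ n * (-1) ^ n = 1" by (simp flip: power_add)
  finally show ?thesis by simp
qed

lemma sums_pochhammer_div_fact_power:
  fixes v E :: complex assumes "norm E < 1"
  shows "(\<lambda>n. pochhammer v n / fact n * E ^ n) sums (1 - E) powr (- v)"
  using gen_binomial_complex[of "- E" "- v"] assms
  by (simp add: gbinomial_uminus_mult_power_uminus)

lemma summable_norm_pochhammer_div_fact_power:
  fixes v :: complex and r :: real assumes "0 \<le> r" "r < 1"
  shows "summable (\<lambda>n. norm (pochhammer v n / fact n) * r ^ n)"
proof -
  have "ereal (norm (complex_of_real r)) < conv_radius (\<lambda>n. (- v) gchoose n)"
    using assms by (simp add: conv_radius_gchoose one_ereal_def)
  from abs_summable_in_conv_radius[OF this]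
  have "summable (\<lambda>n. norm (((- v) gchoose n) * (- (- complex_of_real r)) ^ n))" by simp
  moreover have "norm (((- v) gchoose n) * (- (- complex_of_real r)) ^ n) = norm (pochhammer v n / fact n) * r ^ n" for n
    unfolding gbinomial_uminus_mult_power_uminus using assms by (simp add: norm_mult norm_power norm_divide)
  ultimately show ?thesis by simp
qed

lemma sums_inverse_sinh_pow:
  fixes v c :: complex and x :: real
  assumes "Re c > 0" "x > 0"
  shows "(\<lambda>k. 2 powr v * (pochhammer v k / fact k) * exp (- ((v + 2 * of_nat k) * c * of_real x)))
           sums (1 / sinh_pow v c x)"
proof -
  define E where "E = exp (-2 * c * of_real x)"
  have "norm E < 1" using assms by (simp add: E_def)
  from sums_mult[OF sums_pochhammer_div_fact_power[OF this], of "2 powr v * exp (- (v * c * of_real x))"]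
  have series: "(\<lambda>k. 2 powr v * exp (- (v * c * of_real x)) * (pochhammer v k / fact k * E ^ k))
          sums (2 powr v * exp (- (v * c * of_real x)) * (1 - E) powr (- v))" .
  have summand: "2 powr v * exp (- (v * c * of_real x)) * (pochhammer v k / fact k * E ^ k)
      = 2 powr v * (pochhammer v k / fact k) * exp (- ((v + 2 * of_nat k) * c * of_real x))" for k
  proof -
    have "exp (- (v * c * of_real x)) * E ^ k = exp (- ((v + 2 * of_nat k) * c * of_real x))"
      by (simp add: E_def flip: exp_of_nat_mult exp_add) (simp add: algebra_simps)
    then show ?thesis by (metis mult.assoc mult.left_commute)
  qed
  have limit: "2 powr v * exp (- (v * c * of_real x)) * (1 - E) powr (- v) = 1 / sinh_pow v c x"
    unfolding sinh_pow_def E_def by (simp add: powr_minus exp_minus field_simps)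
  show ?thesis using series unfolding summand limit .
qed

lemma norm_pochhammer_div_fact_le:
  fixes v :: complex
  obtains B where "\<And>n. n \<ge> 1 \<Longrightarrow> norm (pochhammer v (Suc n) / fact (Suc n)) \<le> B * real n powr (Re v - 1)"
proof -
  \<comment> \<open>\<open>rGamma_series v n = pochhammer v (n + 1) / (n! n\<^sup>v)\<close> converges to \<open>1 / \<Gamma>(v)\<close>.\<close>
  have "Bseq (rGamma_series v)"
    using rGamma_series_LIMSEQ by (intro convergent_imp_Bseq) (auto simp: convergent_def)
  then obtain B where B: "B > 0" "\<And>n. norm (rGamma_series v n) \<le> B" by (auto elim: BseqE)
  have "norm (pochhammer v (Suc n) / fact (Suc n)) \<le> B * real n powr (Re v - 1)" if "n \<ge> 1" for n
  proof -
    have "norm (pochhammer v (Suc n) / fact (Suc n))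
          = norm (rGamma_series v n) * real n powr Re v / real (Suc n)"
      using that unfolding rGamma_series_def
      by (simp add: norm_divide norm_mult powr_def del: of_nat_Suc)
    also have "\<dots> \<le> B * real n powr Re v / real n"
      using that B by (intro frac_le mult_right_mono) auto
    also have "\<dots> = B * real n powr (Re v - 1)"
      using that by (simp add: powr_diff)
    finally show ?thesis .
  qed
  then show ?thesis using that by blast
qed

lemma summable_norm_pochhammer_div_fact_div_square:
  fixes v :: complex and d g :: real
  assumes "d > 0" "g > 0" "Re v < 2"
  shows "summable (\<lambda>k. norm (pochhammer v k / fact k) / (d + 2 * real k * g)\<^sup>2)"
proof -
  obtain B where B: "\<And>n. n \<ge> 1 \<Longrightarrow> norm (pochhammer v (Suc n) / fact (Suc n)) \<le> B * real n powr (Re v - 1)"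
    using norm_pochhammer_div_fact_le by blast
  have "summable (\<lambda>n. B / (4 * g\<^sup>2) * real n powr (Re v - 3))"
    using assms(3) by (intro summable_mult) (simp add: summable_real_powr_iff)
  then have "summable (\<lambda>n. norm (pochhammer v (Suc n) / fact (Suc n)) / (d + 2 * real (Suc n) * g)\<^sup>2)"
  proof (rule summable_comparison_test')
    fix n :: nat assume n: "n \<ge> 1"
    have "(2 * real n * g)\<^sup>2 \<le> (d + 2 * real (Suc n) * g)\<^sup>2"
      using assms by (intro power_mono) (auto simp: algebra_simps)
    moreover have "(2 * real n * g)\<^sup>2 > 0" using n assms by auto
    ultimately have "norm (pochhammer v (Suc n) / fact (Suc n)) / (d + 2 * real (Suc n) * g)\<^sup>2
        \<le> B * real n powr (Re v - 1) / (2 * real n * g)\<^sup>2"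
      using B[OF n] order_trans[OF norm_ge_zero B[OF n]] by (intro frac_le) auto
    also have "\<dots> = B / (4 * g\<^sup>2) * real n powr (Re v - 3)"
      using n by (simp add: powr_diff power2_eq_square power3_eq_cube field_simps)
    finally show "norm (norm (pochhammer v (Suc n) / fact (Suc n)) / (d + 2 * real (Suc n) * g)\<^sup>2)
        \<le> B / (4 * g\<^sup>2) * real n powr (Re v - 3)" by simp
  qed
  then show ?thesis by (subst summable_Suc_iff[symmetric])
qed

lemma has_integral_suminf_set_integral:
  fixes f :: "nat \<Rightarrow> 'a::euclidean_space \<Rightarrow> 'b::euclidean_space"
  assumes integrable: "\<And>k. set_integrable lborel A (f k)"
    and summable_norm: "\<And>x. x \<in> A \<Longrightarrow> summable (\<lambda>k. norm (f k x))"
    and sums: "\<And>x. x \<in> A \<Longrightarrow> (\<lambda>k. f k x) sums F x"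
    and summable_integral: "summable (\<lambda>k. LINT x:A|lborel. norm (f k x))"
  shows "summable (\<lambda>k. LINT x:A|lborel. f k x)"
    and "(F has_integral (\<Sum>k. LINT x:A|lborel. f k x)) A"
proof -
  define h where "h k x = indicator A x *\<^sub>R f k x" for k x
  have h: "integrable lborel (h k)" for k
    using integrable[of k] by (simp add: set_integrable_def h_def[abs_def])
  have summable_h: "AE x in lborel. summable (\<lambda>k. norm (h k x))"
    using summable_norm by (intro AE_I2) (auto simp: h_def indicator_def)
  have "summable (\<lambda>k. \<integral>x. norm (h k x) \<partial>lborel)"
    using summable_integral by (simp add: h_def set_lebesgue_integral_def)
  note integrable_suminf[OF h summable_h this] sums_integral[OF h summable_h this]
  moreover have "(\<Sum>k. h k x) = indicator A x *\<^sub>R F x" for x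
    using sums[of x] by (cases "x \<in> A") (simp_all add: h_def sums_iff)
  moreover have "integral\<^sup>L lborel (h k) = (LINT x:A|lborel. f k x)" for k
    by (simp add: h_def[abs_def] set_lebesgue_integral_def)
  ultimately show "summable (\<lambda>k. LINT x:A|lborel. f k x)"
    and "(F has_integral (\<Sum>k. LINT x:A|lborel. f k x)) A"
    using set_borel_integral_eq_integral[of A F]
    by (simp_all add: set_integrable_def set_lebesgue_integral_def sums_iff has_integral_integral)
qed

definition laplace_sinh_cosh :: "complex \<Rightarrow> complex \<Rightarrow> complex \<Rightarrow> complex" where
  "laplace_sinh_cosh a b w = (1 / (w - a - b) + 1 / (w - a + b) - 1 / (w + a - b) - 1 / (w + a + b)) / 4"

lemma sinh_mult_cosh_mult_exp:
  fixes a b w t :: complex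
  shows "sinh (a * t) * cosh (b * t) * exp (- (w * t)) =
    (exp (- ((w - a - b) * t)) + exp (- ((w - a + b) * t))
     - exp (- ((w + a - b) * t)) - exp (- ((w + a + b) * t))) / 4"
proof -
  have "exp (- ((w + p * a + q * b) * t)) = exp (- (p * a * t)) * exp (- (q * b * t)) * exp (- (w * t))"
    for p q :: complex
    by (simp add: mult_exp_exp algebra_simps)
  from this[of "-1" "-1"] this[of "-1" 1] this[of 1 "-1"] this[of 1 1] show ?thesis
    by (simp add: sinh_field_def cosh_field_def field_simps)
qed

lemma Re_shifts_pos:
  fixes a b w :: complex
  assumes "\<bar>Re a\<bar> + \<bar>Re b\<bar> < Re w"
  shows "0 < Re (w - a - b)" "0 < Re (w + a + b)" "0 < Re (w - a + b)" "0 < Re (w + a - b)"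
  using assms by auto

lemma set_integral_sinh_cosh_exp:
  fixes a b w :: complex
  assumes "\<bar>Re a\<bar> + \<bar>Re b\<bar> < Re w"
  shows "set_integrable lborel {0<..}
      (\<lambda>x::real. sinh (a * of_real x) * cosh (b * of_real x) * exp (- (w * of_real x)))"
    and "(LINT x:{0<..}|lborel. sinh (a * of_real x) * cosh (b * of_real x) * exp (- (w * of_real x)))
      = laplace_sinh_cosh a b w"
proof -
  note I = set_integral_complex_exp_neg_mult[OF Re_shifts_pos(1)[OF assms]]
    set_integral_complex_exp_neg_mult[OF Re_shifts_pos(2)[OF assms]]
    set_integral_complex_exp_neg_mult[OF Re_shifts_pos(3)[OF assms]]
    set_integral_complex_exp_neg_mult[OF Re_shifts_pos(4)[OF assms]]
  show "set_integrable lborel {0<..}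
      (\<lambda>x::real. sinh (a * of_real x) * cosh (b * of_real x) * exp (- (w * of_real x)))"
    and "(LINT x:{0<..}|lborel. sinh (a * of_real x) * cosh (b * of_real x) * exp (- (w * of_real x)))
      = laplace_sinh_cosh a b w"
    unfolding sinh_mult_cosh_mult_exp laplace_sinh_cosh_def by (simp_all add: I)
qed

lemma norm_sinh_cosh_exp_le:
  fixes a b w :: complex and x :: real
  assumes "x \<ge> 0"
  shows "norm (sinh (a * of_real x) * cosh (b * of_real x) * exp (- (w * of_real x)))
    \<le> norm a * (x * exp (- ((Re w - \<bar>Re a\<bar> - \<bar>Re b\<bar>) * x)))"
proof -
  have "norm (sinh (a * of_real x) * cosh (b * of_real x) * exp (- (w * of_real x)))
      \<le> (norm a * x * exp (\<bar>Re a\<bar> * x)) * exp (\<bar>Re b\<bar> * x) * exp (- (Re w * x))"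
    using norm_sinh_le[of "a * x"] norm_cosh_le[of "b * x"] assms
    unfolding norm_mult by (intro mult_mono) (auto simp: abs_mult)
  also have "\<dots> = norm a * (x * exp (- ((Re w - \<bar>Re a\<bar> - \<bar>Re b\<bar>) * x)))"
    by (simp add: mult_exp_exp algebra_simps)
  finally show ?thesis .
qed

lemma set_integral_norm_sinh_cosh_exp_le:
  fixes a b w :: complex
  assumes "\<bar>Re a\<bar> + \<bar>Re b\<bar> < Re w"
  shows "(LINT x:{0<..}|lborel. norm (sinh (a * of_real x) * cosh (b * of_real x) * exp (- (w * of_real x))))
    \<le> norm a / (Re w - \<bar>Re a\<bar> - \<bar>Re b\<bar>)\<^sup>2"
proof -
  define d where "d = Re w - \<bar>Re a\<bar> - \<bar>Re b\<bar>"
  have "d > 0" using assms by (simp add: d_def)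
  have bound: "norm (sinh (a * of_real x) * cosh (b * of_real x) * exp (- (w * of_real x)))
      \<le> norm a * (x * exp (- (d * x)))" if "x > 0" for x
    using norm_sinh_cosh_exp_le[of x a b w] that unfolding d_def by simp
  have "(LINT x:{0<..}|lborel. norm (sinh (a * of_real x) * cosh (b * of_real x) * exp (- (w * of_real x))))
      \<le> (LINT x:{0<..}|lborel. norm a * (x * exp (- d * x)))"
    using set_integral_sinh_cosh_exp(1)[OF assms] set_integral_x_exp_neg_mult(1)[OF \<open>d > 0\<close>]
    by (intro set_integral_mono set_integrable_norm set_integrable_mult_right)
      (auto intro: bound)
  also have "\<dots> = norm a / d\<^sup>2"
    using set_integral_x_exp_neg_mult(2)[OF \<open>d > 0\<close>] by simp
  finally show ?thesis by (simp add: d_def)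
qed

lemma abs_Re_add_abs_Re_less_Re_shift:
  fixes a b c v :: complex
  assumes "Re c > 0" "\<bar>Re a\<bar> + \<bar>Re b\<bar> < Re (v * c)"
  shows "\<bar>Re a\<bar> + \<bar>Re b\<bar> < Re ((v + 2 * of_nat k) * c)"
proof -
  have "Re ((v + 2 * of_nat k) * c) = Re (v * c) + 2 * real k * Re c"
    by (simp add: algebra_simps)
  moreover have "0 \<le> 2 * real k * Re c" using assms(1) by simp
  ultimately show ?thesis using assms(2) by linarith
qed

lemma has_integral_sinh_cosh_div_sinh_pow_series:
  fixes a b c v :: complex
  assumes v: "Re v < 2" and c: "Re c > 0" and vc: "\<bar>Re a\<bar> + \<bar>Re b\<bar> < Re (v * c)"
  defines "t k \<equiv> 2 powr v * (pochhammer v k / fact k) * laplace_sinh_cosh a b ((v + 2 * of_nat k) * c)"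
  shows "summable t"
    and "((\<lambda>x::real. sinh (a * of_real x) * cosh (b * of_real x) / sinh_pow v c x)
          has_integral suminf t) {0<..}"
proof -
  define C where "C k = 2 powr v * (pochhammer v k / fact k)" for k :: nat
  define f where "f k x = C k * (sinh (a * of_real x) * cosh (b * of_real x) *
      exp (- ((v + 2 * of_nat k) * c * of_real x)))" for k :: nat and x :: real
  define d where "d = Re (v * c) - \<bar>Re a\<bar> - \<bar>Re b\<bar>"
  have Re_W: "Re ((v + 2 * of_nat k) * c) = Re (v * c) + 2 * real k * Re c" for k
    by (simp add: algebra_simps)
  have W: "\<bar>Re a\<bar> + \<bar>Re b\<bar> < Re ((v + 2 * of_nat k) * c)" for k
    using abs_Re_add_abs_Re_less_Re_shift[OF c vc] .
  have integrable: "set_integrable lborel {0<..} (f k)"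
    and integral: "(LINT x:{0<..}|lborel. f k x) = t k" for k
    using set_integral_sinh_cosh_exp[OF W[of k]]
    by (simp_all add: f_def[abs_def] t_def C_def mult.assoc)
  have summable_norm: "summable (\<lambda>k. norm (f k x))" if "x > 0" for x
  proof -
    define r where "r = exp (- 2 * Re c * x)"
    have "0 \<le> r" "r < 1" using that c by (auto simp: r_def)
    moreover have "norm (f k x) = norm (2 powr v :: complex) * norm (sinh (a * of_real x) * cosh (b * of_real x))
        * exp (- (Re (v * c) * x)) * (norm (pochhammer v k / fact k) * r ^ k)" for k
    proof -
      have "norm (exp (- ((v + 2 * of_nat k) * c * of_real x))) = exp (- (Re (v * c) * x)) * r ^ k"
        unfolding r_def by (simp add: algebra_simps flip: exp_of_nat_mult exp_add)
      then show ?thesis unfolding f_def C_def norm_mult by (simp only: mult_ac)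
    qed
    ultimately show ?thesis by (simp add: summable_norm_pochhammer_div_fact_power)
  qed
  have sums: "(\<lambda>k. f k x) sums (sinh (a * of_real x) * cosh (b * of_real x) / sinh_pow v c x)"
    if "x > 0" for x
    using sums_mult[OF sums_inverse_sinh_pow[OF c that], of "sinh (a * of_real x) * cosh (b * of_real x)"]
    by (simp add: f_def C_def mult_ac)
  have summable_integral: "summable (\<lambda>k. LINT x:{0<..}|lborel. norm (f k x))"
  proof (rule summable_comparison_test')
    show "summable (\<lambda>k. norm (2 powr v :: complex) * norm a *
        (norm (pochhammer v k / fact k) / (d + 2 * real k * Re c)\<^sup>2))"
      using vc c v by (intro summable_mult summable_norm_pochhammer_div_fact_div_square) (auto simp: d_def)
    fix k
    have "(LINT x:{0<..}|lborel. norm (f k x)) = norm (C k) *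
        (LINT x:{0<..}|lborel. norm (sinh (a * of_real x) * cosh (b * of_real x) *
          exp (- ((v + 2 * of_nat k) * c * of_real x))))"
      by (simp add: f_def norm_mult)
    also have "\<dots> \<le> norm (C k) * (norm a / (d + 2 * real k * Re c)\<^sup>2)"
      using set_integral_norm_sinh_cosh_exp_le[OF W[of k]]
      by (intro mult_left_mono) (simp_all add: d_def Re_W algebra_simps)
    finally show "norm (LINT x:{0<..}|lborel. norm (f k x)) \<le> norm (2 powr v :: complex) * norm a *
        (norm (pochhammer v k / fact k) / (d + 2 * real k * Re c)\<^sup>2)"
      by (simp add: C_def norm_mult norm_divide set_lebesgue_integral_def integral_nonneg_AE mult_ac)
  qed
  from has_integral_suminf_set_integral[OF integrable summable_norm sums summable_integral]
  show "summable t"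
    and "((\<lambda>x::real. sinh (a * of_real x) * cosh (b * of_real x) / sinh_pow v c x)
          has_integral suminf t) {0<..}"
    by (simp_all add: integral)
qed

lemma pochhammer_1_plus:
  fixes \<sigma> :: "'a::field"
  assumes "\<sigma> \<noteq> 0"
  shows "pochhammer (1 + \<sigma>) n = (\<sigma> + of_nat n) / \<sigma> * pochhammer \<sigma> n"
  using pochhammer_rec[of \<sigma> n] pochhammer_rec'[of \<sigma> n] assms
  by (simp add: field_simps)

lemma notin_nonpos_Ints_if_1_plus_notin:
  fixes \<sigma> :: complex
  assumes "1 + \<sigma> \<notin> \<int>\<^sub>\<le>\<^sub>0" "\<sigma> \<noteq> 0"
  shows "\<sigma> \<notin> \<int>\<^sub>\<le>\<^sub>0"
proof
  assume "\<sigma> \<in> \<int>\<^sub>\<le>\<^sub>0"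
  then obtain n where "\<sigma> = - of_nat n" by (auto elim!: nonpos_Ints_cases')
  with assms have "1 + \<sigma> = - of_nat (n - 1)" by (cases n) auto
  with assms(1) show False by auto
qed

lemma laplace_sinh_cosh_eq:
  fixes a b s w :: complex
  assumes "s\<^sup>2 = a\<^sup>2 - b\<^sup>2"
    and "w - a - b \<noteq> 0" "w + a + b \<noteq> 0" "w - a + b \<noteq> 0" "w + a - b \<noteq> 0"
  shows "laplace_sinh_cosh a b w = a * (w\<^sup>2 - s\<^sup>2) / ((w - a - b) * (w + a + b) * (w - a + b) * (w + a - b))"
proof -
  have frac: "(1 / d1 + 1 / d3 - 1 / d4 - 1 / d2) / 4
      = (d2 * d3 * d4 + d1 * d2 * d4 - d1 * d2 * d3 - d1 * d3 * d4) / 4 / (d1 * d2 * d3 * d4)"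
    if "d1 \<noteq> 0" "d2 \<noteq> 0" "d3 \<noteq> 0" "d4 \<noteq> 0" for d1 d2 d3 d4 :: complex
    using that by (simp add: field_simps)
  have "(w + a + b) * (w - a + b) * (w + a - b) + (w - a - b) * (w + a + b) * (w + a - b)
      - (w - a - b) * (w + a + b) * (w - a + b) - (w - a - b) * (w - a + b) * (w + a - b)
      = 4 * (a * (w\<^sup>2 - s\<^sup>2))"
    using assms(1) by algebra
  then show ?thesis
    unfolding laplace_sinh_cosh_def frac[OF assms(2-5)] by simp
qed

lemma laplace_sinh_cosh_hypergeo_term:
  fixes v a b c s :: complex and n :: nat
  defines "\<sigma>1 \<equiv> v/2 - s/(2*c)" and "\<sigma>2 \<equiv> v/2 + s/(2*c)"
      and "\<sigma>3 \<equiv> v/2 - a/(2*c) - b/(2*c)" and "\<sigma>4 \<equiv> v/2 - a/(2*c) + b/(2*c)"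
      and "\<sigma>5 \<equiv> v/2 + a/(2*c) + b/(2*c)" and "\<sigma>6 \<equiv> v/2 + a/(2*c) - b/(2*c)"
      and "P \<equiv> (v * c - a - b) * (v * c + a + b) * (v * c - a + b) * (v * c + a - b)"
      and "W \<equiv> (v + 2 * of_nat n) * c"
  assumes c: "c \<noteq> 0" and s: "s\<^sup>2 = a\<^sup>2 - b\<^sup>2" and P: "P \<noteq> 0"
    and W: "W - a - b \<noteq> 0" "W + a + b \<noteq> 0" "W - a + b \<noteq> 0" "W + a - b \<noteq> 0"
    and \<sigma>12: "\<sigma>1 \<notin> \<int>\<^sub>\<le>\<^sub>0" "\<sigma>2 \<notin> \<int>\<^sub>\<le>\<^sub>0"
    and \<sigma>3456: "1 + \<sigma>3 \<notin> \<int>\<^sub>\<le>\<^sub>0" "1 + \<sigma>4 \<notin> \<int>\<^sub>\<le>\<^sub>0" "1 + \<sigma>5 \<notin> \<int>\<^sub>\<le>\<^sub>0" "1 + \<sigma>6 \<notin> \<int>\<^sub>\<le>\<^sub>0"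
  shows "2 powr v * (pochhammer v n / fact n) * laplace_sinh_cosh a b W =
     2 powr v * (v\<^sup>2 * a * c\<^sup>2 - a^3 + a * b\<^sup>2) / P *
     ((\<Prod>x\<leftarrow>[v, 1 + \<sigma>1, 1 + \<sigma>2, \<sigma>3, \<sigma>4, \<sigma>5, \<sigma>6]. pochhammer x n) /
      (\<Prod>x\<leftarrow>[\<sigma>1, \<sigma>2, 1 + \<sigma>3, 1 + \<sigma>4, 1 + \<sigma>5, 1 + \<sigma>6]. pochhammer x n) * 1 ^ n / fact n)"
proof -
  have \<sigma>: "\<sigma>3 = (v * c - a - b) / (2 * c)" "\<sigma>4 = (v * c - a + b) / (2 * c)"
      "\<sigma>5 = (v * c + a + b) / (2 * c)" "\<sigma>6 = (v * c + a - b) / (2 * c)"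
    using c by (simp_all add: \<sigma>3_def \<sigma>4_def \<sigma>5_def \<sigma>6_def field_simps)
  have \<sigma>_n: "\<sigma>3 + of_nat n = (W - a - b) / (2 * c)" "\<sigma>4 + of_nat n = (W - a + b) / (2 * c)"
      "\<sigma>5 + of_nat n = (W + a + b) / (2 * c)" "\<sigma>6 + of_nat n = (W + a - b) / (2 * c)"
    using c by (simp_all add: \<sigma>3_def \<sigma>4_def \<sigma>5_def \<sigma>6_def W_def field_simps)
  have \<sigma>12_n: "(\<sigma>1 + of_nat n) * (\<sigma>2 + of_nat n) = (W\<^sup>2 - s\<^sup>2) / (4 * c\<^sup>2)"
    and \<sigma>12_0: "\<sigma>1 * \<sigma>2 = ((v * c)\<^sup>2 - s\<^sup>2) / (4 * c\<^sup>2)"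
    using c by (simp_all add: \<sigma>1_def \<sigma>2_def W_def field_simps power2_eq_square)
  have nz: "\<sigma>1 \<noteq> 0" "\<sigma>2 \<noteq> 0" "\<sigma>3 \<noteq> 0" "\<sigma>4 \<noteq> 0" "\<sigma>5 \<noteq> 0" "\<sigma>6 \<noteq> 0"
    using \<sigma>12 P c by (auto simp: \<sigma> P_def)
  have nz_n: "\<sigma>3 + of_nat n \<noteq> 0" "\<sigma>4 + of_nat n \<noteq> 0" "\<sigma>5 + of_nat n \<noteq> 0" "\<sigma>6 + of_nat n \<noteq> 0"
    using W c by (simp_all only: \<sigma>_n) auto
  have poch_nz: "pochhammer \<sigma>1 n \<noteq> 0" "pochhammer \<sigma>2 n \<noteq> 0" "pochhammer \<sigma>3 n \<noteq> 0"
      "pochhammer \<sigma>4 n \<noteq> 0" "pochhammer \<sigma>5 n \<noteq> 0" "pochhammer \<sigma>6 n \<noteq> 0"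
    using \<sigma>12 notin_nonpos_Ints_if_1_plus_notin[OF \<sigma>3456(1) nz(3)]
      notin_nonpos_Ints_if_1_plus_notin[OF \<sigma>3456(2) nz(4)]
      notin_nonpos_Ints_if_1_plus_notin[OF \<sigma>3456(3) nz(5)]
      notin_nonpos_Ints_if_1_plus_notin[OF \<sigma>3456(4) nz(6)]
    by (auto simp: pochhammer_eq_0_iff)
  have ratio: "(\<Prod>x\<leftarrow>[v, 1 + \<sigma>1, 1 + \<sigma>2, \<sigma>3, \<sigma>4, \<sigma>5, \<sigma>6]. pochhammer x n) /
      (\<Prod>x\<leftarrow>[\<sigma>1, \<sigma>2, 1 + \<sigma>3, 1 + \<sigma>4, 1 + \<sigma>5, 1 + \<sigma>6]. pochhammer x n) =
      pochhammer v n * ((\<sigma>1 + of_nat n) * (\<sigma>2 + of_nat n) / (\<sigma>1 * \<sigma>2)) *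
      (\<sigma>3 * \<sigma>4 * \<sigma>5 * \<sigma>6 / ((\<sigma>3 + of_nat n) * (\<sigma>4 + of_nat n) * (\<sigma>5 + of_nat n) * (\<sigma>6 + of_nat n)))"
    using nz nz_n poch_nz by (simp add: pochhammer_1_plus divide_simps mult_ac)
  have \<sigma>3456_0: "\<sigma>3 * \<sigma>4 * \<sigma>5 * \<sigma>6 = P / (2 * c) ^ 4"
    by (simp add: \<sigma> P_def field_simps power4_eq_xxxx)
  have \<sigma>3456_n: "(\<sigma>3 + of_nat n) * (\<sigma>4 + of_nat n) * (\<sigma>5 + of_nat n) * (\<sigma>6 + of_nat n)
      = (W - a - b) * (W + a + b) * (W - a + b) * (W + a - b) / (2 * c) ^ 4"
    by (simp add: \<sigma>_n field_simps power4_eq_xxxx)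
  have numerator: "v\<^sup>2 * a * c\<^sup>2 - a^3 + a * b\<^sup>2 = a * ((v * c)\<^sup>2 - s\<^sup>2)"
    using s by algebra
  have cancel: "C * (p / f) * (a * X / Q) = C * (a * Y) / P * (p * ((X / m) / (Y / m)) * ((P / k) / (Q / k)) * 1 ^ n / f)"
    if "f \<noteq> 0" "Y \<noteq> 0" "P \<noteq> 0" "Q \<noteq> 0" "m \<noteq> 0" "k \<noteq> 0" for C p f X Y Q m k :: complex
    using that by (simp add: field_simps)
  show ?thesis
    unfolding ratio laplace_sinh_cosh_eq[OF s W] \<sigma>12_n \<sigma>12_0 \<sigma>3456_0 \<sigma>3456_n numerator
    using c P W nz(1,2) \<sigma>12_0 by (intro cancel) auto
qed

lemma suminf_mult_if_summable:
  fixes f :: "nat \<Rightarrow> 'a::real_normed_field"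
  assumes "summable (\<lambda>n. c * f n)"
  shows "(\<Sum>n. c * f n) = c * suminf f"
  using assms by (cases "c = 0") (simp_all add: suminf_mult)

theorem mainTheorem16:
  fixes v a b c s :: complex
  assumes hv: "Re v < 2" and hc: "Re c > 0"
    and h1: "Re (v * c + a + b) > 0" and h2: "Re (v * c + a - b) > 0"
    and h3: "Re (v * c - a + b) > 0" and h4: "Re (v * c - a - b) > 0"
    and hs: "s\<^sup>2 = a\<^sup>2 - b\<^sup>2"
    and hsig: "v/2 - s/(2*c) \<notin> \<int>\<^sub>\<le>\<^sub>0" "v/2 + s/(2*c) \<notin> \<int>\<^sub>\<le>\<^sub>0"
      "1 + (v/2 - a/(2*c) - b/(2*c)) \<notin> \<int>\<^sub>\<le>\<^sub>0"
      "1 + (v/2 - a/(2*c) + b/(2*c)) \<notin> \<int>\<^sub>\<le>\<^sub>0"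
      "1 + (v/2 + a/(2*c) + b/(2*c)) \<notin> \<int>\<^sub>\<le>\<^sub>0"
      "1 + (v/2 + a/(2*c) - b/(2*c)) \<notin> \<int>\<^sub>\<le>\<^sub>0"
  shows "((\<lambda>x::real. sinh (a * of_real x) * cosh (b * of_real x) / sinh_pow v c x)
          has_integral
          (let \<sigma>1 = v/2 - s/(2*c); \<sigma>2 = v/2 + s/(2*c);
               \<sigma>3 = v/2 - a/(2*c) - b/(2*c); \<sigma>4 = v/2 - a/(2*c) + b/(2*c);
               \<sigma>5 = v/2 + a/(2*c) + b/(2*c); \<sigma>6 = v/2 + a/(2*c) - b/(2*c);
               P = (v * c - a - b) * (v * c + a + b) * (v * c - a + b) * (v * c + a - b)
           in 2 powr v * (v\<^sup>2 * a * c\<^sup>2 - a^3 + a * b\<^sup>2) / P *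
              hypergeo [v, 1 + \<sigma>1, 1 + \<sigma>2, \<sigma>3, \<sigma>4, \<sigma>5, \<sigma>6]
                       [\<sigma>1, \<sigma>2, 1 + \<sigma>3, 1 + \<sigma>4, 1 + \<sigma>5, 1 + \<sigma>6] 1))
         {0<..}"
proof -
  have vc: "\<bar>Re a\<bar> + \<bar>Re b\<bar> < Re (v * c)"
    using h1 h2 h3 h4 by (simp add: abs_if)
  have W: "\<bar>Re a\<bar> + \<bar>Re b\<bar> < Re ((v + 2 * of_nat k) * c)" for k
    using abs_Re_add_abs_Re_less_Re_shift[OF hc vc] .
  have nonzero: "w - a - b \<noteq> 0" "w + a + b \<noteq> 0" "w - a + b \<noteq> 0" "w + a - b \<noteq> 0"
    if "\<bar>Re a\<bar> + \<bar>Re b\<bar> < Re w" for w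
    using Re_shifts_pos[OF that] by (metis less_irrefl zero_complex.sel(1))+
  have c: "c \<noteq> 0" using hc by auto
  have P: "(v * c - a - b) * (v * c + a + b) * (v * c - a + b) * (v * c + a - b) \<noteq> 0"
    using nonzero[OF vc] by simp
  note series_term = laplace_sinh_cosh_hypergeo_term[OF c hs P nonzero[OF W] hsig]
  note series = has_integral_sinh_cosh_div_sinh_pow_series[OF hv hc vc, unfolded series_term]
  show ?thesis
    unfolding Let_def hypergeo_def suminf_mult_if_summable[OF series(1), symmetric] by (rule series(2))
qed

end
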